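(* Let $G$ be a Polish group. If $G$ is locally strongly bounded, then every coarsely bounded subset of $G$ is strongly bounded.
   Context: A topological group is Polish if it is separable and completely metrizable. A subset of a topological group $G$ is coarsely bounded if it has finite diameter in every continuous left-invariant metric on $G$. A subset of $G$ is strongly bounded if it has finite diameter in every left-invariant metric on $G$ (not necessarily continuous). $G$ is locally strongly bounded if some open neighborhood of the identity is strongly bounded. *)

theory Defs
  imports "HOL-Analysis.Analysis" "HOL-Algebra.Group"
begin

definition topological_group :: "('a, 'b) monoid_scheme \<Rightarrow> 'a topology \<Rightarrow> bool" where
  "topological_group G T \<longleftrightarrow>
     group G \<and> topspace T = carrier G \<and>
     continuous_map (prod_topology T T) T (\<lambda>(x, y). x \<otimes>\<^bsub>G\<^esub> y) \<and>
     continuous_map T T (\<lambda>x. inv\<^bsub>G\<^esub> x)"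

definition polish_group :: "('a, 'b) monoid_scheme \<Rightarrow> 'a topology \<Rightarrow> bool" where
  "polish_group G T \<longleftrightarrow>
     topological_group G T \<and> separable_space T \<and> completely_metrizable_space T"

definition left_invariant_metric :: "('a, 'b) monoid_scheme \<Rightarrow> ('a \<Rightarrow> 'a \<Rightarrow> real) \<Rightarrow> bool" where
  "left_invariant_metric G d \<longleftrightarrow>
     Metric_space (carrier G) d \<and>
     (\<forall>g\<in>carrier G. \<forall>x\<in>carrier G. \<forall>y\<in>carrier G. d (g \<otimes>\<^bsub>G\<^esub> x) (g \<otimes>\<^bsub>G\<^esub> y) = d x y)"

definition continuous_left_invariant_metric ::
    "('a, 'b) monoid_scheme \<Rightarrow> 'a topology \<Rightarrow> ('a \<Rightarrow> 'a \<Rightarrow> real) \<Rightarrow> bool" where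
  "continuous_left_invariant_metric G T d \<longleftrightarrow>
     left_invariant_metric G d \<and>
     continuous_map (prod_topology T T) euclideanreal (\<lambda>(x, y). d x y)"

definition finite_diameter :: "('a \<Rightarrow> 'a \<Rightarrow> real) \<Rightarrow> 'a set \<Rightarrow> bool" where
  "finite_diameter d A \<longleftrightarrow> (\<exists>B. \<forall>x\<in>A. \<forall>y\<in>A. d x y \<le> B)"

definition coarsely_bounded :: "('a, 'b) monoid_scheme \<Rightarrow> 'a topology \<Rightarrow> 'a set \<Rightarrow> bool" where
  "coarsely_bounded G T A \<longleftrightarrow> A \<subseteq> carrier G \<and>
     (\<forall>d. continuous_left_invariant_metric G T d \<longrightarrow> finite_diameter d A)"

definition strongly_bounded :: "('a, 'b) monoid_scheme \<Rightarrow> 'a set \<Rightarrow> bool" where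
  "strongly_bounded G A \<longleftrightarrow> A \<subseteq> carrier G \<and>
     (\<forall>d. left_invariant_metric G d \<longrightarrow> finite_diameter d A)"

definition locally_strongly_bounded :: "('a, 'b) monoid_scheme \<Rightarrow> 'a topology \<Rightarrow> bool" where
  "locally_strongly_bounded G T \<longleftrightarrow>
     (\<exists>U. openin T U \<and> \<one>\<^bsub>G\<^esub> \<in> U \<and> strongly_bounded G U)"

end

theory Submission
  imports Defs
begin

text \<open>
  Let d be a left-invariant metric and U an open identity neighbourhood of finite
  d-diameter. As G is metrizable, there are open identity neighbourhoods
  U = V(0) \<supseteq> V(1) \<supseteq> ... with V(n+1)^3 \<subseteq> V(n) and \<Inter>n. V(n) = {1};
  in the other direction the sequence is continued by the balls W(k) = {g. d(1,g) \<le> B 3^k},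
  for which W(k)^3 \<subseteq> W(k+1) by the triangle inequality. For every such filtration L(n),
  n \<in> \<int>, the Birkhoff--Kakutani construction applies: if \<psi>(g) = 2^(-n) for the largest n
  with g \<in> L(n), splitting a word at the letter where the partial sums of \<psi> pass half the
  total gives \<psi>(x1 \<cdots> xk) \<le> 2 (\<psi>(x1) + ... + \<psi>(xk)), so the infimum N of these sums over
  all factorisations is a subadditive norm with \<psi>/2 \<le> N \<le> \<psi>, and
  \<delta>(x,y) = N(x\<inverse>y) + N(y\<inverse>x) is a left-invariant metric (level_norm, chain_norm and
  chain_dist below). It is continuous since the L(n) with n \<ge> 0 are open. So a coarsely
  bounded set A has finite \<delta>-diameter, whence A\<inverse>A \<subseteq> L(n) for some n, i.e. A\<inverse>A lies in a
  ball W(k).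
\<close>

lemma int_cSup_mem:
  fixes X :: "int set"
  assumes "X \<noteq> {}" "bdd_above X"
  shows "Sup X \<in> X"
proof -
  obtain x where x: "x \<in> X" "Sup X - 1 < x"
    using less_cSup_iff[OF assms, of "Sup X - 1"] by auto
  moreover have "x \<le> Sup X"
    using cSup_upper[OF x(1) assms(2)] .
  ultimately have "x = Sup X"
    by arith
  with x(1) show ?thesis
    by simp
qed

lemma split_list_halves:
  fixes f :: "'a \<Rightarrow> real"
  assumes nonneg: "\<And>x. x \<in> set xs \<Longrightarrow> 0 \<le> f x" and "xs \<noteq> []"
  obtains as x bs where "xs = as @ x # bs"
    "sum_list (map f as) \<le> sum_list (map f xs) / 2" "sum_list (map f bs) \<le> sum_list (map f xs) / 2"
proof -
  define S where "S = sum_list (map f xs)"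
  define P where "P j \<longleftrightarrow> S / 2 \<le> sum_list (map f (take (Suc j) xs))" for j
  define k where "k = (LEAST j. P j)"
  have "0 \<le> S"
    unfolding S_def by (rule sum_list_nonneg) (use nonneg in auto)
  then have "P (length xs - 1)"
    unfolding P_def S_def by simp
  then have "P k" and "k \<le> length xs - 1"
    unfolding k_def by (fact LeastI, fact Least_le)
  then have k: "k < length xs"
    using \<open>xs \<noteq> []\<close> by (cases xs) auto
  have "sum_list (map f (take k xs)) \<le> S / 2"
  proof (cases k)
    case 0
    then show ?thesis
      using \<open>0 \<le> S\<close> by simp
  next
    case (Suc j)
    then have "\<not> P j"
      unfolding k_def by (intro not_less_Least) simp
    then show ?thesis
      using Suc unfolding P_def by simp
  qed
  moreover have "sum_list (map f (drop (Suc k) xs)) \<le> S / 2"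
    using \<open>P k\<close> sum_list_append[of "map f (take (Suc k) xs)" "map f (drop (Suc k) xs)"]
    unfolding P_def S_def by (simp flip: map_append)
  moreover have "xs = take k xs @ xs ! k # drop (Suc k) xs"
    using k by (simp add: id_take_nth_drop)
  ultimately show ?thesis
    using that unfolding S_def by blast
qed

locale cube_filtration = group G for G (structure) +
  fixes L :: "int \<Rightarrow> 'a set"
  assumes L_subset: "L n \<subseteq> carrier G"
    and one_in_L: "\<one> \<in> L n"
    and L_cube: "a \<in> L (n + 1) \<Longrightarrow> b \<in> L (n + 1) \<Longrightarrow> c \<in> L (n + 1) \<Longrightarrow> a \<otimes> b \<otimes> c \<in> L n"
    and L_exhaustive: "g \<in> carrier G \<Longrightarrow> \<exists>n. g \<in> L n"
    and L_separating: "g \<in> carrier G \<Longrightarrow> \<forall>n. g \<in> L n \<Longrightarrow> g = \<one>"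
begin

lemma L_antimono:
  assumes "m \<le> n"
  shows "L n \<subseteq> L m"
  using assms
proof (induction n rule: int_ge_induct)
  case (step i)
  have "L (i + 1) \<subseteq> L i"
  proof
    fix a
    assume a: "a \<in> L (i + 1)"
    then have "a \<otimes> \<one> \<otimes> \<one> \<in> L i"
      using L_cube one_in_L by blast
    moreover have "a \<in> carrier G"
      using a L_subset by blast
    ultimately show "a \<in> L i"
      by simp
  qed
  then show ?case
    using step.IH by blast
qed simp

definition level :: "'a \<Rightarrow> int" where
  "level g = Sup {n. g \<in> L n}"

definition level_norm :: "'a \<Rightarrow> real" where
  "level_norm g = (if \<forall>n. g \<in> L n then 0 else 2 powr - level g)"

lemma mem_L_iff_le_level:
  assumes g: "g \<in> carrier G" and "g \<notin> L m"
  shows "g \<in> L n \<longleftrightarrow> n \<le> level g"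
proof -
  have bdd: "bdd_above {n. g \<in> L n}"
  proof (rule bdd_aboveI)
    fix n
    assume "n \<in> {n. g \<in> L n}"
    then show "n \<le> m"
      using L_antimono[of m n] \<open>g \<notin> L m\<close> by force
  qed
  have "{n. g \<in> L n} \<noteq> {}"
    using L_exhaustive[OF g] by blast
  then have "g \<in> L (level g)"
    using int_cSup_mem[OF _ bdd] unfolding level_def by blast
  then show ?thesis
    using L_antimono[of n "level g"] cSup_upper[OF _ bdd] unfolding level_def by auto
qed

lemma level_norm_le_iff:
  assumes "g \<in> carrier G"
  shows "level_norm g \<le> 2 powr - real_of_int n \<longleftrightarrow> g \<in> L n"
proof (cases "\<forall>n. g \<in> L n")
  case False
  then obtain m where "g \<notin> L m"
    by blast
  then show ?thesis
    using False mem_L_iff_le_level[OF assms] unfolding level_norm_def by simp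
qed (simp add: level_norm_def)

lemma level_norm_nonneg: "0 \<le> level_norm g"
  unfolding level_norm_def by simp

lemma level_norm_eq_0_iff:
  assumes "g \<in> carrier G"
  shows "level_norm g = 0 \<longleftrightarrow> g = \<one>"
proof
  assume "level_norm g = 0"
  then have "\<forall>n. g \<in> L n"
    using level_norm_le_iff[OF assms] by simp
  then show "g = \<one>"
    using L_separating[OF assms] by blast
qed (simp add: level_norm_def one_in_L)

lemma level_norm_one [simp]: "level_norm \<one> = 0"
  by (simp add: level_norm_eq_0_iff)

lemma level_norm_mult3:
  assumes x: "x \<in> carrier G" and y: "y \<in> carrier G" and z: "z \<in> carrier G"
  shows "level_norm (x \<otimes> y \<otimes> z) \<le> 2 * max (level_norm x) (max (level_norm y) (level_norm z))"
    (is "_ \<le> 2 * ?M")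
proof -
  have "?M = level_norm x \<or> ?M = level_norm y \<or> ?M = level_norm z"
    by linarith
  then obtain w where "?M = level_norm w"
    by blast
  then consider "?M = 0" | "?M = 2 powr - real_of_int (level w)"
    unfolding level_norm_def[of w] by (cases "\<forall>n. w \<in> L n") simp_all
  then show ?thesis
  proof cases
    case 1
    then have "level_norm x = 0" "level_norm y = 0" "level_norm z = 0"
      using level_norm_nonneg[of x] level_norm_nonneg[of y] level_norm_nonneg[of z] by linarith+
    then show ?thesis
      using x y z level_norm_nonneg by (simp add: level_norm_eq_0_iff)
  next
    case 2
    define m where "m = level w"
    have "level_norm x \<le> ?M" "level_norm y \<le> ?M" "level_norm z \<le> ?M"
      by linarith+
    then have "x \<in> L ((m - 1) + 1)" "y \<in> L ((m - 1) + 1)" "z \<in> L ((m - 1) + 1)"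
      using level_norm_le_iff[OF x, of m] level_norm_le_iff[OF y, of m] level_norm_le_iff[OF z, of m]
      unfolding 2 m_def by simp_all
    then have "x \<otimes> y \<otimes> z \<in> L (m - 1)"
      by (rule L_cube)
    then have "level_norm (x \<otimes> y \<otimes> z) \<le> 2 powr - real_of_int (m - 1)"
      using level_norm_le_iff[of "x \<otimes> y \<otimes> z" "m - 1"] x y z by simp
    also have "\<dots> = 2 * ?M"
      unfolding 2 m_def using powr_add[of 2 1 "- real_of_int (level w)"] by simp
    finally show ?thesis .
  qed
qed

definition mult_list :: "'a list \<Rightarrow> 'a" where
  "mult_list xs = foldr (\<otimes>) xs \<one>"

lemma mult_list_simps [simp]:
  "mult_list [] = \<one>"
  "mult_list (x # xs) = x \<otimes> mult_list xs"
  unfolding mult_list_def by simp_all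

lemma mult_list_closed [simp]: "set xs \<subseteq> carrier G \<Longrightarrow> mult_list xs \<in> carrier G"
  by (induction xs) auto

lemma mult_list_append:
  "set xs \<subseteq> carrier G \<Longrightarrow> set ys \<subseteq> carrier G \<Longrightarrow> mult_list (xs @ ys) = mult_list xs \<otimes> mult_list ys"
  by (induction xs) (auto simp: m_assoc)

lemma level_norm_mult_list:
  "set xs \<subseteq> carrier G \<Longrightarrow> level_norm (mult_list xs) \<le> 2 * sum_list (map level_norm xs)"
proof (induction "length xs" arbitrary: xs rule: less_induct)
  case less
  show ?case
  proof (cases "xs = []")
    case False
    define S where "S = sum_list (map level_norm xs)"
    have "\<And>x. x \<in> set xs \<Longrightarrow> 0 \<le> level_norm x"
      by (rule level_norm_nonneg)
    from split_list_halves[OF this False]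
    obtain as x bs where split: "xs = as @ x # bs"
      and as_sum: "sum_list (map level_norm as) \<le> S / 2"
      and bs_sum: "sum_list (map level_norm bs) \<le> S / 2"
      unfolding S_def .
    have as: "set as \<subseteq> carrier G" and x: "x \<in> carrier G" and bs: "set bs \<subseteq> carrier G"
      using less.prems unfolding split by auto
    have "level_norm (mult_list as) \<le> S" "level_norm (mult_list bs) \<le> S"
      using less.hyps[of as] less.hyps[of bs] as bs as_sum bs_sum unfolding split by auto
    moreover have "level_norm x \<le> S"
    proof -
      have "S = sum_list (map level_norm as) + level_norm x + sum_list (map level_norm bs)"
        unfolding S_def split by simp
      moreover have "0 \<le> sum_list (map level_norm as)" "0 \<le> sum_list (map level_norm bs)"
        by (auto intro!: sum_list_nonneg simp: level_norm_nonneg)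
      ultimately show ?thesis
        by linarith
    qed
    moreover have "mult_list xs = mult_list as \<otimes> x \<otimes> mult_list bs"
      using as bs x unfolding split by (simp add: mult_list_append m_assoc)
    ultimately show ?thesis
      using level_norm_mult3[of "mult_list as" x "mult_list bs"] as bs x unfolding S_def by simp
  qed simp
qed

definition chain_norm :: "'a \<Rightarrow> real" where
  "chain_norm g = Inf {sum_list (map level_norm xs) | xs. set xs \<subseteq> carrier G \<and> mult_list xs = g}"

lemma chain_norm_le_sum:
  assumes "set xs \<subseteq> carrier G"
  shows "chain_norm (mult_list xs) \<le> sum_list (map level_norm xs)"
  unfolding chain_norm_def
proof (rule cInf_lower)
  show "bdd_below {sum_list (map level_norm ys) | ys. set ys \<subseteq> carrier G \<and> mult_list ys = mult_list xs}"
    by (rule bdd_belowI[of _ 0]) (auto intro!: sum_list_nonneg simp: level_norm_nonneg)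
qed (use assms in blast)

lemma chain_norm_le_level_norm: "g \<in> carrier G \<Longrightarrow> chain_norm g \<le> level_norm g"
  using chain_norm_le_sum[of "[g]"] by simp

lemma chain_norm_greatest:
  assumes "g \<in> carrier G"
    and "\<And>xs. set xs \<subseteq> carrier G \<Longrightarrow> mult_list xs = g \<Longrightarrow> c \<le> sum_list (map level_norm xs)"
  shows "c \<le> chain_norm g"
  unfolding chain_norm_def
proof (rule cInf_greatest)
  show "{sum_list (map level_norm xs) | xs. set xs \<subseteq> carrier G \<and> mult_list xs = g} \<noteq> {}"
    using assms(1) by (auto intro: exI[of _ "[g]"])
qed (use assms(2) in blast)

lemma level_norm_le_chain_norm: "g \<in> carrier G \<Longrightarrow> level_norm g \<le> 2 * chain_norm g"
  using chain_norm_greatest[of g "level_norm g / 2"] level_norm_mult_list by fastforce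

lemma chain_norm_nonneg: "g \<in> carrier G \<Longrightarrow> 0 \<le> chain_norm g"
  using level_norm_le_chain_norm[of g] level_norm_nonneg[of g] by simp

lemma chain_norm_one: "chain_norm \<one> = 0"
  using chain_norm_le_level_norm[of \<one>] chain_norm_nonneg[of \<one>] by simp

lemma chain_norm_mult:
  assumes g: "g \<in> carrier G" and h: "h \<in> carrier G"
  shows "chain_norm (g \<otimes> h) \<le> chain_norm g + chain_norm h"
proof -
  have "chain_norm (g \<otimes> h) - chain_norm g \<le> chain_norm h"
  proof (rule chain_norm_greatest[OF h])
    fix ys
    assume ys: "set ys \<subseteq> carrier G" "mult_list ys = h"
    have "chain_norm (g \<otimes> h) - sum_list (map level_norm ys) \<le> chain_norm g"
    proof (rule chain_norm_greatest[OF g])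
      fix xs
      assume xs: "set xs \<subseteq> carrier G" "mult_list xs = g"
      show "chain_norm (g \<otimes> h) - sum_list (map level_norm ys) \<le> sum_list (map level_norm xs)"
        using chain_norm_le_sum[of "xs @ ys"] xs ys by (simp add: mult_list_append)
    qed
    then show "chain_norm (g \<otimes> h) - chain_norm g \<le> sum_list (map level_norm ys)"
      by simp
  qed
  then show ?thesis
    by simp
qed

lemma chain_norm_diff_le:
  assumes g: "g \<in> carrier G" and h: "h \<in> carrier G"
    and "inv g \<otimes> h \<in> L n" "inv h \<otimes> g \<in> L n"
  shows "\<bar>chain_norm h - chain_norm g\<bar> \<le> 2 powr - real_of_int n"
proof -
  have "chain_norm h \<le> chain_norm g + chain_norm (inv g \<otimes> h)"
    using chain_norm_mult[of g "inv g \<otimes> h"] g h by (simp add: m_assoc[symmetric])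
  moreover have "chain_norm g \<le> chain_norm h + chain_norm (inv h \<otimes> g)"
    using chain_norm_mult[of h "inv h \<otimes> g"] g h by (simp add: m_assoc[symmetric])
  moreover have "chain_norm (inv g \<otimes> h) \<le> 2 powr - real_of_int n"
    using chain_norm_le_level_norm[of "inv g \<otimes> h"] level_norm_le_iff[of "inv g \<otimes> h" n] assms by simp
  moreover have "chain_norm (inv h \<otimes> g) \<le> 2 powr - real_of_int n"
    using chain_norm_le_level_norm[of "inv h \<otimes> g"] level_norm_le_iff[of "inv h \<otimes> g" n] assms by simp
  ultimately show ?thesis
    by linarith
qed

text \<open>The levels need not be closed under inversion, hence the symmetrisation.\<close>

definition chain_dist :: "'a \<Rightarrow> 'a \<Rightarrow> real" where
  "chain_dist x y =
     (if x \<in> carrier G \<and> y \<in> carrier G then chain_norm (inv x \<otimes> y) + chain_norm (inv y \<otimes> x) else 0)"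

lemma level_norm_le_chain_dist:
  "x \<in> carrier G \<Longrightarrow> y \<in> carrier G \<Longrightarrow> level_norm (inv x \<otimes> y) \<le> 2 * chain_dist x y"
  unfolding chain_dist_def using level_norm_le_chain_norm[of "inv x \<otimes> y"] chain_norm_nonneg[of "inv y \<otimes> x"]
  by simp

lemma chain_dist_left_invariant_metric: "left_invariant_metric G chain_dist"
  unfolding left_invariant_metric_def
proof
  show "Metric_space (carrier G) chain_dist"
  proof
    fix x y
    show "0 \<le> chain_dist x y" "chain_dist x y = chain_dist y x"
      unfolding chain_dist_def by (auto intro!: add_nonneg_nonneg chain_norm_nonneg)
  next
    fix x y
    assume x: "x \<in> carrier G" and y: "y \<in> carrier G"
    show "chain_dist x y = 0 \<longleftrightarrow> x = y"
    proof
      assume "chain_dist x y = 0"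
      then have "level_norm (inv x \<otimes> y) = 0"
        using level_norm_le_chain_dist[OF x y] level_norm_nonneg[of "inv x \<otimes> y"] by simp
      then show "x = y"
        using x y by (simp add: level_norm_eq_0_iff) (metis inv_equality inv_inv l_inv_ex r_inv)
    qed (simp add: chain_dist_def x chain_norm_one)
  next
    fix x y z
    assume x: "x \<in> carrier G" and y: "y \<in> carrier G" and z: "z \<in> carrier G"
    have "inv x \<otimes> z = (inv x \<otimes> y) \<otimes> (inv y \<otimes> z)" "inv z \<otimes> x = (inv z \<otimes> y) \<otimes> (inv y \<otimes> x)"
      using x y z by (simp_all add: m_assoc[symmetric]) (simp_all add: m_assoc)
    then show "chain_dist x z \<le> chain_dist x y + chain_dist y z"
      using chain_norm_mult[of "inv x \<otimes> y" "inv y \<otimes> z"] chain_norm_mult[of "inv z \<otimes> y" "inv y \<otimes> x"]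
        x y z unfolding chain_dist_def by simp
  qed
  show "\<forall>g\<in>carrier G. \<forall>x\<in>carrier G. \<forall>y\<in>carrier G. chain_dist (g \<otimes> x) (g \<otimes> y) = chain_dist x y"
    unfolding chain_dist_def by (simp add: inv_mult_group m_assoc[symmetric]) (simp add: m_assoc)
qed

end

lemma topological_groupD:
  assumes "topological_group G T"
  shows "group G" "topspace T = carrier G"
    "continuous_map (prod_topology T T) T (\<lambda>(x, y). x \<otimes>\<^bsub>G\<^esub> y)"
    "continuous_map T T (\<lambda>x. inv\<^bsub>G\<^esub> x)"
  using assms unfolding topological_group_def by auto

lemma topological_group_continuous_left_mult:
  assumes tg: "topological_group G T" and a: "a \<in> carrier G"
  shows "continuous_map T T (\<lambda>g. a \<otimes>\<^bsub>G\<^esub> g)"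
proof -
  have "continuous_map T (prod_topology T T) (\<lambda>g. (a, g))"
    using a topological_groupD(2)[OF tg] by (intro continuous_map_pairedI) auto
  from continuous_map_compose[OF this topological_groupD(3)[OF tg]] show ?thesis
    by (simp add: o_def)
qed

lemma topological_group_continuous_right_mult:
  assumes tg: "topological_group G T" and a: "a \<in> carrier G"
  shows "continuous_map T T (\<lambda>g. g \<otimes>\<^bsub>G\<^esub> a)"
proof -
  have "continuous_map T (prod_topology T T) (\<lambda>g. (g, a))"
    using a topological_groupD(2)[OF tg] by (intro continuous_map_pairedI) auto
  from continuous_map_compose[OF this topological_groupD(3)[OF tg]] show ?thesis
    by (simp add: o_def)
qed

lemma topological_group_continuous_inv_mult:
  assumes tg: "topological_group G T"
  shows "continuous_map (prod_topology T T) T (\<lambda>z. inv\<^bsub>G\<^esub> (fst z) \<otimes>\<^bsub>G\<^esub> snd z)"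
proof -
  have "continuous_map (prod_topology T T) T (\<lambda>z. inv\<^bsub>G\<^esub> (fst z))"
    using continuous_map_compose[OF continuous_map_fst topological_groupD(4)[OF tg]] by (simp add: o_def)
  then have "continuous_map (prod_topology T T) (prod_topology T T) (\<lambda>z. (inv\<^bsub>G\<^esub> (fst z), snd z))"
    by (intro continuous_map_pairedI continuous_map_snd)
  from continuous_map_compose[OF this topological_groupD(3)[OF tg]] show ?thesis
    by (simp add: o_def)
qed

lemma topological_group_square_nbhd:
  assumes tg: "topological_group G T" and N: "openin T N" "\<one>\<^bsub>G\<^esub> \<in> N"
  obtains V where "openin T V" "\<one>\<^bsub>G\<^esub> \<in> V" "V \<subseteq> N"
    "\<And>a b. a \<in> V \<Longrightarrow> b \<in> V \<Longrightarrow> a \<otimes>\<^bsub>G\<^esub> b \<in> N"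
proof -
  define P where "P = {z \<in> topspace (prod_topology T T). (\<lambda>(x, y). x \<otimes>\<^bsub>G\<^esub> y) z \<in> N}"
  have "openin (prod_topology T T) P"
    unfolding P_def using topological_groupD(3)[OF tg] N(1) by (rule openin_continuous_map_preimage)
  moreover have "(\<one>\<^bsub>G\<^esub>, \<one>\<^bsub>G\<^esub>) \<in> P"
    using N(2) monoid.l_one[OF group.is_monoid[OF topological_groupD(1)[OF tg]]]
      monoid.one_closed[OF group.is_monoid[OF topological_groupD(1)[OF tg]]] topological_groupD(2)[OF tg]
    unfolding P_def by simp
  ultimately obtain V1 V2
    where V: "openin T V1" "openin T V2" "\<one>\<^bsub>G\<^esub> \<in> V1" "\<one>\<^bsub>G\<^esub> \<in> V2" "V1 \<times> V2 \<subseteq> P"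
    unfolding openin_prod_topology_alt by (elim allE impE exE conjE)
  show ?thesis
  proof (rule that)
    show "openin T (V1 \<inter> V2 \<inter> N)"
      using V(1,2) N(1) by (intro openin_Int)
    show "\<one>\<^bsub>G\<^esub> \<in> V1 \<inter> V2 \<inter> N"
      using V(3,4) N(2) by blast
    show "V1 \<inter> V2 \<inter> N \<subseteq> N"
      by blast
    fix a b
    assume "a \<in> V1 \<inter> V2 \<inter> N" "b \<in> V1 \<inter> V2 \<inter> N"
    then have "(a, b) \<in> P"
      using V(5) by blast
    then show "a \<otimes>\<^bsub>G\<^esub> b \<in> N"
      unfolding P_def by simp
  qed
qed

lemma topological_group_cube_nbhd:
  assumes tg: "topological_group G T" and N: "openin T N" "\<one>\<^bsub>G\<^esub> \<in> N"
  obtains V where "openin T V" "\<one>\<^bsub>G\<^esub> \<in> V" "V \<subseteq> N"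
    "\<And>a b c. a \<in> V \<Longrightarrow> b \<in> V \<Longrightarrow> c \<in> V \<Longrightarrow> a \<otimes>\<^bsub>G\<^esub> b \<otimes>\<^bsub>G\<^esub> c \<in> N"
proof -
  obtain V1 where V1: "openin T V1" "\<one>\<^bsub>G\<^esub> \<in> V1" "V1 \<subseteq> N"
    "\<And>a b. a \<in> V1 \<Longrightarrow> b \<in> V1 \<Longrightarrow> a \<otimes>\<^bsub>G\<^esub> b \<in> N"
    by (fact topological_group_square_nbhd[OF tg N])
  obtain V2 where V2: "openin T V2" "\<one>\<^bsub>G\<^esub> \<in> V2" "V2 \<subseteq> V1"
    "\<And>a b. a \<in> V2 \<Longrightarrow> b \<in> V2 \<Longrightarrow> a \<otimes>\<^bsub>G\<^esub> b \<in> V1"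
    by (fact topological_group_square_nbhd[OF tg V1(1,2)])
  show ?thesis
  proof (rule that[OF V2(1,2)])
    show "V2 \<subseteq> N"
      using V1(3) V2(3) by blast
    fix a b c
    assume "a \<in> V2" "b \<in> V2" "c \<in> V2"
    then have "a \<otimes>\<^bsub>G\<^esub> b \<in> V1" "c \<in> V1"
      using V2(3,4) by auto
    then show "a \<otimes>\<^bsub>G\<^esub> b \<otimes>\<^bsub>G\<^esub> c \<in> N"
      by (rule V1(4))
  qed
qed

context cube_filtration
begin

lemma chain_norm_continuous:
  assumes tg: "topological_group G T" and L_open: "\<And>n. 0 \<le> n \<Longrightarrow> openin T (L n)"
  shows "continuous_map T euclideanreal chain_norm"
proof -
  have "continuous_map T Met_TC.mtopology chain_norm"
    unfolding Met_TC.continuous_map_to_metric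
  proof (intro ballI allI impI)
    fix g and e :: real
    assume "g \<in> topspace T" and "0 < e"
    then have g: "g \<in> carrier G"
      using topological_groupD(2)[OF tg] by simp
    obtain k :: nat where "1 / e < 2 ^ k"
      using real_arch_pow[of 2 "1 / e"] by auto
    then have k: "2 powr - real_of_int (int k) < e"
      using \<open>0 < e\<close> by (simp add: powr_minus powr_realpow field_simps)
    define N where "N = {h \<in> topspace T. inv g \<otimes> h \<in> L k} \<inter> {h \<in> topspace T. inv h \<otimes> g \<in> L k}"
    have "continuous_map T T (\<lambda>h. inv g \<otimes> h)"
      using topological_group_continuous_left_mult[OF tg] g by simp
    moreover have "continuous_map T T (\<lambda>h. inv h \<otimes> g)"
      using continuous_map_compose[OF topological_groupD(4)[OF tg] topological_group_continuous_right_mult[OF tg g]]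
      by (simp add: o_def)
    ultimately have "openin T N"
      unfolding N_def using L_open[of k] by (intro openin_Int openin_continuous_map_preimage) auto
    moreover have "g \<in> N"
      unfolding N_def using \<open>g \<in> topspace T\<close> g one_in_L by simp
    moreover have "chain_norm h \<in> Met_TC.mball (chain_norm g) e" if "h \<in> N" for h
    proof -
      have "h \<in> carrier G" "inv g \<otimes> h \<in> L k" "inv h \<otimes> g \<in> L k"
        using that topological_groupD(2)[OF tg] unfolding N_def by auto
      then have "\<bar>chain_norm h - chain_norm g\<bar> \<le> 2 powr - real_of_int (int k)"
        by (intro chain_norm_diff_le[OF g])
      then show ?thesis
        using k by (simp add: dist_real_def abs_minus_commute)
    qed
    ultimately show "\<exists>N. openin T N \<and> g \<in> N \<and> (\<forall>h\<in>N. chain_norm h \<in> Met_TC.mball (chain_norm g) e)"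
      by blast
  qed
  then show ?thesis
    by simp
qed

lemma chain_dist_continuous_left_invariant_metric:
  assumes tg: "topological_group G T" and L_open: "\<And>n. 0 \<le> n \<Longrightarrow> openin T (L n)"
  shows "continuous_left_invariant_metric G T chain_dist"
proof -
  have left: "continuous_map (prod_topology T T) euclideanreal (\<lambda>z. chain_norm (inv (fst z) \<otimes> snd z))"
    using continuous_map_compose[OF topological_group_continuous_inv_mult[OF tg]
        chain_norm_continuous[OF tg L_open]]
    by (simp add: o_def)
  have "continuous_map (prod_topology T T) (prod_topology T T) (\<lambda>z. (snd z, fst z))"
    by (intro continuous_map_pairedI continuous_map_snd continuous_map_fst)
  from continuous_map_compose[OF this left]
  have right: "continuous_map (prod_topology T T) euclideanreal (\<lambda>z. chain_norm (inv (snd z) \<otimes> fst z))"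
    by (simp add: o_def)
  have "continuous_map (prod_topology T T) euclideanreal (\<lambda>(x, y). chain_dist x y)"
    using continuous_map_add[OF left right]
    by (rule continuous_map_eq) (auto simp: chain_dist_def topological_groupD(2)[OF tg])
  then show ?thesis
    unfolding continuous_left_invariant_metric_def using chain_dist_left_invariant_metric by blast
qed

lemma coarsely_bounded_imp_quotients_in_L:
  assumes tg: "topological_group G T" and L_open: "\<And>n. 0 \<le> n \<Longrightarrow> openin T (L n)"
    and A: "coarsely_bounded G T A"
  obtains n where "\<And>x y. x \<in> A \<Longrightarrow> y \<in> A \<Longrightarrow> inv x \<otimes> y \<in> L n"
proof -
  obtain B where B: "\<And>x y. x \<in> A \<Longrightarrow> y \<in> A \<Longrightarrow> chain_dist x y \<le> B"
    using A chain_dist_continuous_left_invariant_metric[OF tg L_open]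
    unfolding coarsely_bounded_def finite_diameter_def by blast
  obtain k :: nat where k: "2 * B < 2 ^ k"
    using real_arch_pow[of 2 "2 * B"] by auto
  show ?thesis
  proof
    fix x y
    assume "x \<in> A" "y \<in> A"
    then have x: "x \<in> carrier G" and y: "y \<in> carrier G" and "chain_dist x y \<le> B"
      using A B unfolding coarsely_bounded_def by auto
    then have "level_norm (inv x \<otimes> y) \<le> 2 powr - real_of_int (- int k)"
      using level_norm_le_chain_dist[OF x y] k by (simp add: powr_realpow)
    then show "inv x \<otimes> y \<in> L (- int k)"
      using level_norm_le_iff[of "inv x \<otimes> y" "- int k"] x y by simp
  qed
qed

end

lemma (in group) left_invariant_metric_mult3:
  assumes d: "left_invariant_metric G d"
    and a: "a \<in> carrier G" and b: "b \<in> carrier G" and c: "c \<in> carrier G"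
  shows "d \<one> (a \<otimes> b \<otimes> c) \<le> d \<one> a + d \<one> b + d \<one> c"
proof -
  have M: "Metric_space (carrier G) d"
    and inv: "\<And>g x y. g \<in> carrier G \<Longrightarrow> x \<in> carrier G \<Longrightarrow> y \<in> carrier G \<Longrightarrow> d (g \<otimes> x) (g \<otimes> y) = d x y"
    using d unfolding left_invariant_metric_def by auto
  have "d \<one> (a \<otimes> b \<otimes> c) \<le> d \<one> a + d a (a \<otimes> b \<otimes> c)"
    and "d a (a \<otimes> b \<otimes> c) \<le> d a (a \<otimes> b) + d (a \<otimes> b) (a \<otimes> b \<otimes> c)"
    using Metric_space.triangle[OF M] a b c by simp_all
  moreover have "d a (a \<otimes> b) = d \<one> b" "d (a \<otimes> b) (a \<otimes> b \<otimes> c) = d \<one> c"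
    using inv[of a \<one> b] inv[of "a \<otimes> b" \<one> c] a b c by simp_all
  ultimately show ?thesis
    by linarith
qed

lemma (in group) cube_filtration_nbhds_balls:
  assumes d: "left_invariant_metric G d" and "0 < B"
    and V0: "\<And>u. u \<in> V 0 \<Longrightarrow> d \<one> u \<le> B"
    and V_subset: "\<And>n. V n \<subseteq> carrier G" and one_in_V: "\<And>n. \<one> \<in> V n"
    and V_cube: "\<And>n a b c. a \<in> V (Suc n) \<Longrightarrow> b \<in> V (Suc n) \<Longrightarrow> c \<in> V (Suc n) \<Longrightarrow> a \<otimes> b \<otimes> c \<in> V n"
    and V_separating: "\<And>g. g \<in> carrier G \<Longrightarrow> \<forall>n. g \<in> V n \<Longrightarrow> g = \<one>"
  shows "cube_filtration G (\<lambda>n. if 0 \<le> n then V (nat n) else {g \<in> carrier G. d \<one> g \<le> B * 3 ^ nat (- n)})"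
    (is "cube_filtration G ?L")
proof unfold_locales
  have "d \<one> \<one> = 0"
    using d Metric_space.zero[of "carrier G" d \<one> \<one>] unfolding left_invariant_metric_def by simp
  then show "?L n \<subseteq> carrier G" "\<one> \<in> ?L n" for n
    using V_subset one_in_V \<open>0 < B\<close> by auto
next
  fix n :: int and a b c
  assume abc: "a \<in> ?L (n + 1)" "b \<in> ?L (n + 1)" "c \<in> ?L (n + 1)"
  show "a \<otimes> b \<otimes> c \<in> ?L n"
  proof (cases "0 \<le> n")
    case True
    then have "nat (n + 1) = Suc (nat n)"
      by simp
    then show ?thesis
      using abc True V_cube by simp
  next
    case False
    have "?L (n + 1) = (if n = -1 then V 0 else {g \<in> carrier G. d \<one> g \<le> B * 3 ^ nat (- n - 1)})"
      using False by auto
    then have ball: "x \<in> carrier G" "d \<one> x \<le> B * 3 ^ nat (- n - 1)" if "x \<in> ?L (n + 1)" for x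
      using that V0 V_subset by (auto split: if_splits)
    have "d \<one> (a \<otimes> b \<otimes> c) \<le> d \<one> a + d \<one> b + d \<one> c"
      using left_invariant_metric_mult3[OF d] ball(1)[OF abc(1)] ball(1)[OF abc(2)] ball(1)[OF abc(3)]
      by blast
    also have "\<dots> \<le> 3 * (B * 3 ^ nat (- n - 1))"
      using ball(2)[OF abc(1)] ball(2)[OF abc(2)] ball(2)[OF abc(3)] by linarith
    also have "\<dots> = B * 3 ^ nat (- n)"
      using False by (simp add: nat_diff_distrib' power_Suc[symmetric] Suc_nat_eq_nat_zadd1)
    finally show ?thesis
      using False ball(1)[OF abc(1)] ball(1)[OF abc(2)] ball(1)[OF abc(3)] by simp
  qed
next
  fix g
  assume g: "g \<in> carrier G"
  obtain k :: nat where "d \<one> g / B < 3 ^ k"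
    using real_arch_pow[of 3 "d \<one> g / B"] by auto
  then have "d \<one> g < B * 3 ^ k"
    using \<open>0 < B\<close> by (simp add: field_simps)
  also have "\<dots> \<le> B * 3 ^ Suc k"
    using \<open>0 < B\<close> by simp
  finally have "d \<one> g \<le> B * 3 ^ Suc k"
    by simp
  then show "\<exists>n. g \<in> ?L n"
    using g by (intro exI[of _ "- int (Suc k)"]) (simp add: nat_add_distrib)
next
  fix g
  assume g: "g \<in> carrier G" and "\<forall>n. g \<in> ?L n"
  then have "g \<in> V k" for k
    by (metis nat_int of_nat_0_le_iff)
  then show "g = \<one>"
    using V_separating[OF g] by blast
qed

lemma (in group) metrizable_group_nbhd_chain:
  assumes tg: "topological_group G T" and "metrizable_space T" and U: "openin T U" "\<one> \<in> U"
  obtains V where "V 0 = U" "\<And>n. openin T (V n)" "\<And>n. \<one> \<in> V n"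
    "\<And>n a b c. a \<in> V (Suc n) \<Longrightarrow> b \<in> V (Suc n) \<Longrightarrow> c \<in> V (Suc n) \<Longrightarrow> a \<otimes> b \<otimes> c \<in> V n"
    "\<And>g. g \<in> carrier G \<Longrightarrow> \<forall>n. g \<in> V n \<Longrightarrow> g = \<one>"
proof -
  obtain M m where Mm: "Metric_space M m" and T: "T = Metric_space.mtopology M m"
    using \<open>metrizable_space T\<close> unfolding metrizable_space_def by blast
  interpret Metric_space M m
    by (fact Mm)
  have M: "M = carrier G"
    using T topological_groupD(2)[OF tg] by simp
  define P where "P n V \<longleftrightarrow> openin T V \<and> \<one> \<in> V \<and> (n = 0 \<longrightarrow> V = U)" for n :: nat and V
  define Q where "Q n V W \<longleftrightarrow> W \<subseteq> mball \<one> (1 / Suc n) \<and>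
      (\<forall>a\<in>W. \<forall>b\<in>W. \<forall>c\<in>W. a \<otimes> b \<otimes> c \<in> V)" for n :: nat and V W
  have "\<exists>W. P (Suc n) W \<and> Q n V W" if "P n V" for n V
  proof -
    have "openin T (mball \<one> (1 / Suc n))"
      unfolding T by (rule openin_mball)
    moreover have "\<one> \<in> M"
      using M by simp
    then have "\<one> \<in> mball \<one> (1 / Suc n)"
      by simp
    ultimately have N: "openin T (V \<inter> mball \<one> (1 / Suc n))" "\<one> \<in> V \<inter> mball \<one> (1 / Suc n)"
      using that unfolding P_def by auto
    obtain W where "openin T W" "\<one> \<in> W" "W \<subseteq> V \<inter> mball \<one> (1 / Suc n)"
      "\<And>a b c. a \<in> W \<Longrightarrow> b \<in> W \<Longrightarrow> c \<in> W \<Longrightarrow> a \<otimes> b \<otimes> c \<in> V \<inter> mball \<one> (1 / Suc n)"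
      by (fact topological_group_cube_nbhd[OF tg N])
    then have "P (Suc n) W \<and> Q n V W"
      unfolding P_def Q_def by blast
    then show ?thesis ..
  qed
  then obtain V where V: "\<And>n. P n (V n) \<and> Q n (V n) (V (Suc n))"
    using dependent_nat_choice[of P Q] U unfolding P_def by blast
  show ?thesis
  proof
    fix g
    assume g: "g \<in> carrier G" and "\<forall>n. g \<in> V n"
    then have small: "m \<one> g < 1 / Suc n" for n
      using V[of n] unfolding Q_def by auto
    have "m \<one> g = 0"
    proof (rule ccontr)
      assume "m \<one> g \<noteq> 0"
      then have "0 < m \<one> g"
        using nonneg[of \<one> g] by linarith
      then obtain n where "1 / Suc n < m \<one> g"
        by (rule nat_approx_posE)
      then show False
        using small[of n] by simp
    qed
    then show "g = \<one>"
      using g M by simp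
  qed (use V in \<open>auto simp: P_def Q_def\<close>)
qed

lemma (in group) left_invariant_metric_dist_one:
  assumes "left_invariant_metric G d" "x \<in> carrier G" "y \<in> carrier G"
  shows "d x y = d \<one> (inv x \<otimes> y)"
proof -
  have "\<forall>g\<in>carrier G. \<forall>x\<in>carrier G. \<forall>y\<in>carrier G. d (g \<otimes> x) (g \<otimes> y) = d x y"
    using assms(1) unfolding left_invariant_metric_def by blast
  then show ?thesis
    using assms(2,3) by (metis inv_closed l_inv)
qed

lemma (in group) coarsely_bounded_imp_finite_diameter:
  assumes tg: "topological_group G T" and "metrizable_space T"
    and U: "openin T U" "\<one> \<in> U"
    and d: "left_invariant_metric G d" and "0 < B" and U_bounded: "\<And>u. u \<in> U \<Longrightarrow> d \<one> u \<le> B"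
    and A: "coarsely_bounded G T A"
  shows "finite_diameter d A"
proof -
  obtain V where V: "V 0 = U" "\<And>n. openin T (V n)" "\<And>n. \<one> \<in> V n"
    "\<And>n a b c. a \<in> V (Suc n) \<Longrightarrow> b \<in> V (Suc n) \<Longrightarrow> c \<in> V (Suc n) \<Longrightarrow> a \<otimes> b \<otimes> c \<in> V n"
    "\<And>g. g \<in> carrier G \<Longrightarrow> \<forall>n. g \<in> V n \<Longrightarrow> g = \<one>"
    by (fact metrizable_group_nbhd_chain[OF tg \<open>metrizable_space T\<close> U])
  define L where "L n = (if 0 \<le> n then V (nat n) else {g \<in> carrier G. d \<one> g \<le> B * 3 ^ nat (- n)})"
    for n :: int
  have "V n \<subseteq> carrier G" for n
    using openin_subset[OF V(2)] topological_groupD(2)[OF tg] by simp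
  then interpret cube_filtration G L
    unfolding L_def using V U_bounded \<open>0 < B\<close> by (intro cube_filtration_nbhds_balls[OF d]) auto
  have L_open: "openin T (L n)" if "0 \<le> n" for n
    using that V(2) unfolding L_def by simp
  obtain n where n: "\<And>x y. x \<in> A \<Longrightarrow> y \<in> A \<Longrightarrow> inv x \<otimes> y \<in> L n"
    using coarsely_bounded_imp_quotients_in_L[OF tg L_open A] by metis
  obtain k :: nat where "0 < k" "- int k \<le> n"
    by (rule that[of "Suc (nat (- n))"]) auto
  then have L_k: "L (- int k) = {g \<in> carrier G. d \<one> g \<le> B * 3 ^ k}"
    unfolding L_def by simp
  have "d x y \<le> B * 3 ^ k" if "x \<in> A" "y \<in> A" for x y
  proof -
    have "inv x \<otimes> y \<in> L (- int k)"
      using n[OF that] L_antimono[OF \<open>- int k \<le> n\<close>] by auto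
    moreover have "x \<in> carrier G" "y \<in> carrier G"
      using that A unfolding coarsely_bounded_def by auto
    then have "d x y = d \<one> (inv x \<otimes> y)"
      by (rule left_invariant_metric_dist_one[OF d])
    ultimately show ?thesis
      unfolding L_k by simp
  qed
  then show ?thesis
    unfolding finite_diameter_def by blast
qed

lemma (in group) coarsely_bounded_imp_strongly_bounded:
  assumes tg: "topological_group G T" and "metrizable_space T"
    and "locally_strongly_bounded G T" and A: "coarsely_bounded G T A"
  shows "strongly_bounded G A"
  unfolding strongly_bounded_def
proof (intro conjI allI impI)
  show "A \<subseteq> carrier G"
    using A unfolding coarsely_bounded_def by blast
  fix d
  assume d: "left_invariant_metric G d"
  obtain U where U: "openin T U" "\<one> \<in> U" and "strongly_bounded G U"
    using \<open>locally_strongly_bounded G T\<close> unfolding locally_strongly_bounded_def by blast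
  then obtain B where "\<And>x y. x \<in> U \<Longrightarrow> y \<in> U \<Longrightarrow> d x y \<le> B"
    using d unfolding strongly_bounded_def finite_diameter_def by blast
  then have U_bounded: "\<And>u. u \<in> U \<Longrightarrow> d \<one> u \<le> max B 1"
    using U(2) by force
  have "0 < max B 1"
    by simp
  from coarsely_bounded_imp_finite_diameter[OF tg \<open>metrizable_space T\<close> U d this U_bounded A]
  show "finite_diameter d A" .
qed

theorem proposition2p12:
  fixes G :: "('a, 'b) monoid_scheme" and T :: "'a topology"
  assumes "polish_group G T"
    and "locally_strongly_bounded G T"
  shows "\<forall>A. coarsely_bounded G T A \<longrightarrow> strongly_bounded G A"
proof -
  have tg: "topological_group G T" and "metrizable_space T"
    using assms(1) completely_metrizable_imp_metrizable_space unfolding polish_group_def by auto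
  then show ?thesis
    using group.coarsely_bounded_imp_strongly_bounded[OF topological_groupD(1)[OF tg] tg _ assms(2)]
    by blast
qed

end
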